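(* Let $(\Theta,\mathcal{B},\mu,\omega)$ be an ergodic metric dynamical system and let $\Psi:\mathbb{R}\times\Theta\times\mathbb{R}\to\Theta\times\mathbb{R}$, $(t,\theta,x)\mapsto(\theta\cdot t,\psi_t(\theta,x))$, be a measurable map satisfying the cocycle property $\psi_{t_1+t_2}(\theta,x)=\psi_{t_2}(\theta\cdot t_1,\psi_{t_1}(\theta,x))$ for all $t_1,t_2\in\mathbb{R}$, $\theta\in\Theta$, $x\in\mathbb{R}$. Assume: (i) $\psi_t(\theta,x+1)=\psi_t(\theta,x)+1$ for all $(t,\theta,x)\in\mathbb{R}\times\Theta\times\mathbb{R}$; (ii) there is a constant $C\ge0$ such that $\psi_t(\theta,x)\le\psi_t(\theta,x')+C$ for all $t\in\mathbb{R}$, $\theta\in\Theta$ and $x,x'\in\mathbb{R}$ with $x\le x'$; (iii) there is a constant $\eta\ge0$ such that $|\psi_t(\theta,x)-x|\le\eta$ for all $(t,\theta,x)\in[0,1]\times\Theta\times\mathbb{R}$. Then there exist a real number $\rho$ and a set $\Theta_0\subseteq\Theta$ with $\mu(\Theta_0)=1$ such that $$\lim_{t\to\infty}\frac{\psi_t(\theta,x)-x}{t}=\rho\quad\text{for all }(\theta,x)\in\Theta_0\times\mathbb{R}.$$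
   Context: A metric dynamical system $(\Theta,\mathcal{B},\mu,\omega)$ consists of a probability space $(\Theta,\mathcal{B},\mu)$ and a measurable flow $\omega:\mathbb{R}\times\Theta\to\Theta$, written $\omega_t(\theta)=\theta\cdot t$, with $\mu\circ\omega_t^{-1}=\mu$ for all $t\in\mathbb{R}$; it is ergodic if every invariant measurable set has measure $0$ or $1$. *)

theory Defs
  imports "HOL-Probability.Probability"
begin

text \<open>Metric dynamical system: probability space M with a measurable flow
  w (written w t \<theta> = \<theta>\<cdot>t) preserving the measure.\<close>
definition mds :: "'a measure \<Rightarrow> (real \<Rightarrow> 'a \<Rightarrow> 'a) \<Rightarrow> bool" where
  "mds M w \<longleftrightarrow> prob_space M
     \<and> (\<lambda>(t, \<theta>). w t \<theta>) \<in> borel \<Otimes>\<^sub>M M \<rightarrow>\<^sub>M M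
     \<and> (\<forall>\<theta>\<in>space M. w 0 \<theta> = \<theta>)
     \<and> (\<forall>s t. \<forall>\<theta>\<in>space M. w (s + t) \<theta> = w t (w s \<theta>))
     \<and> (\<forall>t. distr M M (w t) = M)"

definition flow_invariant :: "'a measure \<Rightarrow> (real \<Rightarrow> 'a \<Rightarrow> 'a) \<Rightarrow> 'a set \<Rightarrow> bool" where
  "flow_invariant M w A \<longleftrightarrow> A \<in> sets M \<and> (\<forall>t. w t -` A \<inter> space M = A)"

definition ergodic_mds :: "'a measure \<Rightarrow> (real \<Rightarrow> 'a \<Rightarrow> 'a) \<Rightarrow> bool" where
  "ergodic_mds M w \<longleftrightarrow> mds M w
     \<and> (\<forall>A. flow_invariant M w A \<longrightarrow> measure M A = 0 \<or> measure M A = 1)"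

end

theory Submission
  imports Defs "HOL-Real_Asymp.Real_Asymp"
begin

text \<open>Sample the cocycle at integer times, \<open>a\<^sub>n(\<theta>) = \<psi>\<^sub>n(\<theta>, 0)\<close>. Periodicity and almost
  monotonicity keep \<open>\<psi>\<^sub>t(\<theta>, x) - x\<close> within \<open>C + 1\<close> of \<open>\<psi>\<^sub>t(\<theta>, 0)\<close>, so \<open>a\<close> is additive along
  the flow up to the constant \<open>C + 1\<close> and grows at most linearly. The events
  \<open>limsup a\<^sub>n/n \<ge> c\<close> are flow invariant, so by ergodicity \<open>limsup a\<^sub>n/n\<close> and
  \<open>limsup (-a\<^sub>n)/n\<close> are almost surely constants \<open>L\<close> and \<open>L'\<close>. A Katznelson--Weiss
  stopping-time argument turns "\<open>a\<^sub>n \<ge> n (L - \<epsilon>)\<close> for infinitely many \<open>n\<close>, almost surely" into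
  \<open>\<integral> a\<^sub>n \<ge> n (L - 2\<epsilon>)\<close> for all large \<open>n\<close>; doing this for \<open>a\<close> and \<open>-a\<close> gives \<open>L + L' \<le> 0\<close>,
  i.e. \<open>a\<^sub>n/n\<close> converges almost surely. Condition (iii) interpolates between integer times.\<close>

text \<open>\<open>limsup_rate_ge x c\<close> expresses \<open>limsup\<^sub>k x\<^sub>k / k \<ge> c\<close> without extended reals.\<close>

definition limsup_rate_ge :: "(nat \<Rightarrow> real) \<Rightarrow> real \<Rightarrow> bool" where
  "limsup_rate_ge x c \<longleftrightarrow> (\<forall>c'<c. \<exists>\<^sub>F k in sequentially. real k * c' \<le> x k)"

lemma eventually_less_linear:
  fixes d R :: real
  assumes "d > 0"
  shows "\<forall>\<^sub>F k in sequentially. R < real k * d"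
proof -
  obtain N :: nat where "R / d < real N"
    using reals_Archimedean2 by blast
  then have "R < real N * d"
    using assms by (simp add: pos_divide_less_eq)
  also have "\<dots> \<le> real k * d" if "N \<le> k" for k
    using assms that by (simp add: mult_right_mono)
  finally have "R < real k * d" if "N \<le> k" for k
    using that by simp
  then show ?thesis
    by (auto simp: eventually_sequentially)
qed

lemma limsup_rate_ge_antimono: "c' \<le> c \<Longrightarrow> limsup_rate_ge x c \<Longrightarrow> limsup_rate_ge x c'"
  unfolding limsup_rate_ge_def by simp

lemma limsup_rate_ge_iff_countable:
  "limsup_rate_ge x c \<longleftrightarrow> (\<forall>j::nat. \<forall>N. \<exists>k\<ge>N. real k * (c - 1 / real (Suc j)) \<le> x k)"
proof
  assume "limsup_rate_ge x c"
  then show "\<forall>j::nat. \<forall>N. \<exists>k\<ge>N. real k * (c - 1 / real (Suc j)) \<le> x k"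
    by (simp add: limsup_rate_ge_def frequently_sequentially)
next
  assume H: "\<forall>j::nat. \<forall>N. \<exists>k\<ge>N. real k * (c - 1 / real (Suc j)) \<le> x k"
  show "limsup_rate_ge x c"
    unfolding limsup_rate_ge_def
  proof (intro allI impI)
    fix c' assume "c' < c"
    then obtain j where j: "1 / real (Suc j) < c - c'"
      by (metis diff_gt_0_iff_gt inverse_eq_divide reals_Archimedean)
    have "\<exists>\<^sub>F k in sequentially. real k * (c - 1 / real (Suc j)) \<le> x k"
      using H by (simp add: frequently_sequentially)
    then show "\<exists>\<^sub>F k in sequentially. real k * c' \<le> x k"
    proof (rule frequently_elim1)
      fix k assume "real k * (c - 1 / real (Suc j)) \<le> x k"
      moreover have "real k * c' \<le> real k * (c - 1 / real (Suc j))"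
        using j by (intro mult_left_mono) auto
      ultimately show "real k * c' \<le> x k" by simp
    qed
  qed
qed

lemma limsup_rate_ge_perturb:
  assumes bound: "\<And>k. x k \<le> y k + R" and x: "limsup_rate_ge x c"
  shows "limsup_rate_ge y c"
  unfolding limsup_rate_ge_def
proof (intro allI impI)
  fix c' assume "c' < c"
  define c'' where "c'' = (c + c') / 2"
  have "c'' < c"
    using \<open>c' < c\<close> by (simp add: c''_def)
  then have "\<exists>\<^sub>F k in sequentially. real k * c'' \<le> x k"
    using x by (simp add: limsup_rate_ge_def)
  moreover have "\<forall>\<^sub>F k in sequentially. R < real k * (c'' - c')"
    using \<open>c' < c\<close> by (intro eventually_less_linear) (simp add: c''_def)
  then have "\<forall>\<^sub>F k in sequentially. real k * c'' \<le> x k \<longrightarrow> real k * c' \<le> y k"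
  proof (rule eventually_mono)
    fix k assume "R < real k * (c'' - c')"
    then show "real k * c'' \<le> x k \<longrightarrow> real k * c' \<le> y k"
      using bound[of k] by (simp add: right_diff_distrib)
  qed
  ultimately show "\<exists>\<^sub>F k in sequentially. real k * c' \<le> y k"
    by (rule frequently_rev_mp)
qed

lemma frequently_sequentially_seg:
  "(\<exists>\<^sub>F k in sequentially. P (k + m)) \<longleftrightarrow> (\<exists>\<^sub>F k in sequentially. P k)"
  using eventually_sequentially_seg[of "\<lambda>k. \<not> P k" m] by (simp add: frequently_def)

lemma mult_index_shift_le:
  fixes a b :: real
  assumes "real m * (\<bar>a\<bar> + \<bar>b\<bar>) < real k * (b - a)"
  shows "real k * a \<le> real (k + m) * b" and "real (k + m) * a \<le> real k * b"
proof -
  have "\<bar>real m * a\<bar> + \<bar>real m * b\<bar> < real k * (b - a)"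
    using assms by (simp add: abs_mult distrib_left)
  then show "real k * a \<le> real (k + m) * b" and "real (k + m) * a \<le> real k * b"
    by (auto simp: algebra_simps)
qed

lemma limsup_rate_ge_index_shift:
  "limsup_rate_ge (\<lambda>k. x (k + m)) c \<longleftrightarrow> limsup_rate_ge x c"
proof -
  have gap: "\<forall>\<^sub>F k in sequentially. real m * (\<bar>c'\<bar> + \<bar>c''\<bar>) < real k * (c'' - c')"
    if "c' < c''" for c' c'' :: real
    using that by (intro eventually_less_linear) simp
  have seg: "(\<exists>\<^sub>F k in sequentially. real k * c' \<le> x k) \<longleftrightarrow>
      (\<exists>\<^sub>F k in sequentially. real (k + m) * c' \<le> x (k + m))" for c'
    by (rule frequently_sequentially_seg[symmetric])
  have "limsup_rate_ge x c \<longleftrightarrow>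
        (\<forall>c'<c. \<exists>\<^sub>F k in sequentially. real (k + m) * c' \<le> x (k + m))"
    unfolding limsup_rate_ge_def seg ..
  also have "\<dots> \<longleftrightarrow> (\<forall>c'<c. \<exists>\<^sub>F k in sequentially. real k * c' \<le> x (k + m))"
  proof (intro iffI allI impI)
    fix c' assume H: "\<forall>c'<c. \<exists>\<^sub>F k in sequentially. real (k + m) * c' \<le> x (k + m)" and "c' < c"
    define c'' where "c'' = (c + c') / 2"
    have "c' < c''" "c'' < c" using \<open>c' < c\<close> by (auto simp: c''_def)
    from H \<open>c'' < c\<close> have "\<exists>\<^sub>F k in sequentially. real (k + m) * c'' \<le> x (k + m)" by blast
    moreover have "\<forall>\<^sub>F k in sequentially. real (k + m) * c'' \<le> x (k + m) \<longrightarrow> real k * c' \<le> x (k + m)"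
      using gap[OF \<open>c' < c''\<close>] by (rule eventually_mono) (meson mult_index_shift_le(1) order_trans)
    ultimately show "\<exists>\<^sub>F k in sequentially. real k * c' \<le> x (k + m)"
      by (rule frequently_rev_mp)
  next
    fix c' assume H: "\<forall>c'<c. \<exists>\<^sub>F k in sequentially. real k * c' \<le> x (k + m)" and "c' < c"
    define c'' where "c'' = (c + c') / 2"
    have "c' < c''" "c'' < c" using \<open>c' < c\<close> by (auto simp: c''_def)
    from H \<open>c'' < c\<close> have "\<exists>\<^sub>F k in sequentially. real k * c'' \<le> x (k + m)" by blast
    moreover have "\<forall>\<^sub>F k in sequentially. real k * c'' \<le> x (k + m) \<longrightarrow> real (k + m) * c' \<le> x (k + m)"
      using gap[OF \<open>c' < c''\<close>] by (rule eventually_mono) (meson mult_index_shift_le(2) order_trans)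
    ultimately show "\<exists>\<^sub>F k in sequentially. real (k + m) * c' \<le> x (k + m)"
      by (rule frequently_rev_mp)
  qed
  finally show ?thesis
    unfolding limsup_rate_ge_def by (rule sym)
qed

lemma limsup_rate_ge_bounded_shift:
  assumes "\<And>k. \<bar>x k - y (k + m)\<bar> \<le> R"
  shows "limsup_rate_ge x c \<longleftrightarrow> limsup_rate_ge y c"
proof -
  have "x k \<le> y (k + m) + R" "y (k + m) \<le> x k + R" for k
    using assms[of k] by (simp_all add: abs_le_iff)
  then have "limsup_rate_ge x c \<longleftrightarrow> limsup_rate_ge (\<lambda>k. y (k + m)) c"
    using limsup_rate_ge_perturb[of x "\<lambda>k. y (k + m)" R c]
      limsup_rate_ge_perturb[of "\<lambda>k. y (k + m)" x R c] by blast
  also have "\<dots> \<longleftrightarrow> limsup_rate_ge y c"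
    by (rule limsup_rate_ge_index_shift)
  finally show ?thesis .
qed

lemma not_limsup_rate_geE:
  assumes "\<not> limsup_rate_ge x c"
  obtains c' where "c' < c" "\<forall>\<^sub>F k in sequentially. x k < real k * c'"
  using assms by (auto simp: limsup_rate_ge_def not_frequently not_le)

lemma limsup_rate_ge_linear_lower:
  assumes bound: "\<And>k. \<bar>x k\<bar> \<le> A * (real k + 1)"
  shows "limsup_rate_ge x (- A)"
  unfolding limsup_rate_ge_def
proof (intro allI impI eventually_frequently)
  fix c' assume "c' < - A"
  then have "\<forall>\<^sub>F k in sequentially. A < real k * (- A - c')"
    by (intro eventually_less_linear) simp
  then show "\<forall>\<^sub>F k in sequentially. real k * c' \<le> x k"
  proof (rule eventually_mono)
    fix k assume "A < real k * (- A - c')"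
    then show "real k * c' \<le> x k"
      using bound[of k] by (simp add: algebra_simps abs_le_iff)
  qed
qed simp

lemma limsup_rate_ge_linear_upper:
  assumes bound: "\<And>k. \<bar>x k\<bar> \<le> A * (real k + 1)" and "limsup_rate_ge x c"
  shows "c \<le> A"
proof (rule ccontr)
  assume "\<not> c \<le> A"
  define c' where "c' = (A + c) / 2"
  have "c' < c" "A < c'" using \<open>\<not> c \<le> A\<close> by (auto simp: c'_def)
  have "\<forall>\<^sub>F k in sequentially. A < real k * (c' - A)"
    using \<open>A < c'\<close> by (intro eventually_less_linear) simp
  then have "\<forall>\<^sub>F k in sequentially. \<not> real k * c' \<le> x k"
  proof (rule eventually_mono)
    fix k assume "A < real k * (c' - A)"
    then show "\<not> real k * c' \<le> x k"
      using bound[of k] by (simp add: algebra_simps abs_le_iff)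
  qed
  moreover have "\<exists>\<^sub>F k in sequentially. real k * c' \<le> x k"
    using \<open>limsup_rate_ge x c\<close> \<open>c' < c\<close> by (simp add: limsup_rate_ge_def)
  ultimately show False
    by (simp add: frequently_def)
qed

lemma tendsto_rate_if_not_limsup_rate_ge:
  assumes upper: "\<And>c. L < c \<Longrightarrow> \<not> limsup_rate_ge x c"
    and lower: "\<And>c. - L < c \<Longrightarrow> \<not> limsup_rate_ge (\<lambda>k. - x k) c"
  shows "(\<lambda>k. x k / real k) \<longlonglongrightarrow> L"
proof (rule order_tendstoI)
  fix c assume "L < c"
  then obtain c' where "c' < c" and ev: "\<forall>\<^sub>F k in sequentially. x k < real k * c'"
    using upper by (blast elim: not_limsup_rate_geE)
  show "\<forall>\<^sub>F k in sequentially. x k / real k < c"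
    using ev eventually_gt_at_top[of 0]
  proof eventually_elim
    fix k :: nat assume "x k < real k * c'" "0 < k"
    then have "x k / real k < c'"
      by (simp add: divide_less_eq mult.commute)
    with \<open>c' < c\<close> show "x k / real k < c" by simp
  qed
next
  fix c assume "c < L"
  then obtain c' where "c' < - c" and ev: "\<forall>\<^sub>F k in sequentially. - x k < real k * c'"
    using lower[of "- c"] by (auto elim: not_limsup_rate_geE)
  show "\<forall>\<^sub>F k in sequentially. c < x k / real k"
    using ev eventually_gt_at_top[of 0]
  proof eventually_elim
    fix k :: nat assume "- x k < real k * c'" "0 < k"
    then have "- c' < x k / real k"
      by (simp add: less_divide_eq mult.commute)
    with \<open>c' < - c\<close> show "c < x k / real k" by simp
  qed
qed

lemma tendsto_at_top_if_close_to_floor: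
  fixes f :: "real \<Rightarrow> real" and x :: "nat \<Rightarrow> real"
  assumes lim: "(\<lambda>n. x n / real n) \<longlonglongrightarrow> L"
    and close: "\<And>t. 0 \<le> t \<Longrightarrow> \<bar>f t - x (nat \<lfloor>t\<rfloor>)\<bar> \<le> R"
  shows "((\<lambda>t. f t / t) \<longlongrightarrow> L) at_top"
proof -
  have floor_lim: "filterlim (\<lambda>t::real. nat \<lfloor>t\<rfloor>) sequentially at_top"
    by (rule filterlim_compose[OF filterlim_nat_sequentially filterlim_floor_sequentially])
  have "((\<lambda>t::real. x (nat \<lfloor>t\<rfloor>) / real (nat \<lfloor>t\<rfloor>)) \<longlongrightarrow> L) at_top"
    using filterlim_compose[OF lim floor_lim] by simp
  moreover have "((\<lambda>t::real. real (nat \<lfloor>t\<rfloor>) / t) \<longlongrightarrow> 1) at_top"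
    by real_asymp
  moreover have "((\<lambda>t. (f t - x (nat \<lfloor>t\<rfloor>)) / t) \<longlongrightarrow> 0) at_top"
  proof (rule Lim_null_comparison)
    show "\<forall>\<^sub>F t in at_top. norm ((f t - x (nat \<lfloor>t\<rfloor>)) / t) \<le> R / t"
      using eventually_gt_at_top[of 0]
      by eventually_elim (use close in \<open>auto simp: divide_right_mono\<close>)
    show "((\<lambda>t. R / t) \<longlongrightarrow> 0) at_top"
      by real_asymp
  qed
  ultimately have "((\<lambda>t. (f t - x (nat \<lfloor>t\<rfloor>)) / t
      + x (nat \<lfloor>t\<rfloor>) / real (nat \<lfloor>t\<rfloor>) * (real (nat \<lfloor>t\<rfloor>) / t)) \<longlongrightarrow> 0 + L * 1) at_top"
    by (intro tendsto_intros)
  moreover have "\<forall>\<^sub>F t in at_top. (f t - x (nat \<lfloor>t\<rfloor>)) / t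
      + x (nat \<lfloor>t\<rfloor>) / real (nat \<lfloor>t\<rfloor>) * (real (nat \<lfloor>t\<rfloor>) / t) = f t / t"
    using eventually_ge_at_top[of "1 :: real"]
  proof eventually_elim
    case (elim t)
    then have "1 \<le> \<lfloor>t\<rfloor>"
      by simp
    then have "\<lfloor>t\<rfloor> \<noteq> 0"
      by linarith
    with elim show ?case
      by (simp add: field_simps)
  qed
  ultimately show ?thesis
    by (simp add: tendsto_cong)
qed

lemma (in prob_space) zero_one_threshold:
  fixes W :: "real \<Rightarrow> 'a set"
  assumes sets: "\<And>c. W c \<in> sets M"
    and antimono: "\<And>c c'. c \<le> c' \<Longrightarrow> W c' \<subseteq> W c"
    and zero_one: "\<And>c. prob (W c) = 0 \<or> prob (W c) = 1"
    and one: "prob (W c\<^sub>0) = 1"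
    and bounded: "\<And>c. prob (W c) = 1 \<Longrightarrow> c \<le> U"
  shows "\<exists>L. (\<forall>c<L. prob (W c) = 1) \<and> (\<forall>c>L. prob (W c) = 0)"
proof -
  define L where "L = Sup {c. prob (W c) = 1}"
  have bdd: "bdd_above {c. prob (W c) = 1}"
    using bounded by (intro bdd_aboveI[where M = U]) auto
  have ne: "{c. prob (W c) = 1} \<noteq> {}"
    using one by auto
  show ?thesis
  proof (intro exI conjI allI impI)
    fix c assume "c < L"
    then obtain c' where c': "prob (W c') = 1" "c < c'"
      using less_cSup_iff[OF ne bdd] unfolding L_def by auto
    have "prob (W c') \<le> prob (W c)"
      using antimono[of c c'] c' sets by (intro finite_measure_mono) auto
    then show "prob (W c) = 1"
      using c' zero_one[of c] by auto
  next
    fix c assume "L < c"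
    have "prob (W c) \<noteq> 1"
      using \<open>L < c\<close> cSup_upper[OF _ bdd, of c] unfolding L_def by auto
    then show "prob (W c) = 0"
      using zero_one[of c] by auto
  qed
qed

locale almost_superadditive = prob_space M
  for M :: "'a measure" +
  fixes S :: "nat \<Rightarrow> 'a \<Rightarrow> 'a" and a :: "nat \<Rightarrow> 'a \<Rightarrow> real" and A D :: real
  assumes S_measurable [measurable]: "S n \<in> M \<rightarrow>\<^sub>M M"
    and distr_S: "distr M M (S n) = M"
    and S_0: "\<theta> \<in> space M \<Longrightarrow> S 0 \<theta> = \<theta>"
    and S_add: "\<theta> \<in> space M \<Longrightarrow> S (n + m) \<theta> = S m (S n \<theta>)"
    and a_measurable [measurable]: "a n \<in> borel_measurable M"
    and a_bound: "\<theta> \<in> space M \<Longrightarrow> \<bar>a n \<theta>\<bar> \<le> A * (real n + 1)"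
    and a_superadd: "\<theta> \<in> space M \<Longrightarrow> a n \<theta> + a m (S n \<theta>) - D \<le> a (n + m) \<theta>"
    and D_nonneg: "0 \<le> D"
begin

lemma A_nonneg: "0 \<le> A"
proof -
  obtain \<theta> where "\<theta> \<in> space M"
    using not_empty by blast
  from a_bound[OF this, of 0] show ?thesis by simp
qed

lemma integrable_a: "integrable M (a n)"
  using a_bound by (intro integrable_const_bound[where B = "A * (real n + 1)"]) auto

definition visits :: "'a set \<Rightarrow> nat \<Rightarrow> 'a \<Rightarrow> real" where
  "visits B n \<theta> = (\<Sum>j<n. indicator B (S j \<theta>))"

lemma visits_nonneg: "0 \<le> visits B n \<theta>"
  unfolding visits_def by (intro sum_nonneg) auto

lemma visits_Suc:
  assumes "\<theta> \<in> space M"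
  shows "visits B (Suc n) \<theta> = indicator B \<theta> + visits B n (S 1 \<theta>)"
proof -
  have "visits B (Suc n) \<theta> = indicator B (S 0 \<theta>) + (\<Sum>j<n. indicator B (S (Suc j) \<theta>))"
    unfolding visits_def by (rule sum.lessThan_Suc_shift)
  also have "\<dots> = indicator B \<theta> + visits B n (S 1 \<theta>)"
    unfolding visits_def S_0[OF assms] Suc_eq_plus1_left S_add[OF assms] ..
  finally show ?thesis .
qed

lemma visits_shift_le:
  assumes "\<theta> \<in> space M" "k \<le> n"
  shows "visits B (n - k) (S k \<theta>) \<le> visits B n \<theta>"
proof -
  have "visits B (n - k) (S k \<theta>) = (\<Sum>j\<in>(\<lambda>j. k + j) ` {..<n - k}. indicator B (S j \<theta>))"
    unfolding visits_def using S_add[OF assms(1)] by (simp add: sum.reindex)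
  also have "\<dots> \<le> visits B n \<theta>"
    unfolding visits_def using assms(2) by (intro sum_mono2) auto
  finally show ?thesis .
qed

lemma integrable_visits:
  assumes [measurable]: "B \<in> sets M"
  shows "integrable M (visits B n)"
proof -
  have "integrable M (\<lambda>\<theta>. indicator B (S j \<theta>) :: real)" for j
    by (rule integrable_const_bound[where B = 1]) auto
  then show ?thesis
    unfolding visits_def by (rule Bochner_Integration.integrable_sum)
qed

lemma integral_visits:
  assumes [measurable]: "B \<in> sets M"
  shows "(\<integral>\<theta>. visits B n \<theta> \<partial>M) = real n * prob B"
proof -
  have "(\<integral>\<theta>. indicator B (S j \<theta>) \<partial>M) = prob B" for j
    using integral_distr[OF S_measurable, of "indicator B :: 'a \<Rightarrow> real" j] distr_S[of j]
    by (simp add: Int_absorb2)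
  then show ?thesis
    unfolding visits_def
    by (subst Bochner_Integration.integral_sum) (auto intro: integrable_const_bound[where B = 1])
qed

definition late_set :: "real \<Rightarrow> nat \<Rightarrow> nat \<Rightarrow> 'a set" where
  "late_set c Q K = {\<theta> \<in> space M. \<forall>k\<in>{Q..K}. a k \<theta> < real k * c}"

lemma late_set_sets [measurable]: "late_set c Q K \<in> sets M"
  unfolding late_set_def by measurable

lemma stopping_time_step_record:
  assumes "\<theta> \<in> space M" "1 \<le> Q" and k: "Q \<le> k" "k < n" "real k * c \<le> a k \<theta>"
    and slack: "D \<le> real Q * (c - c')" and "0 \<le> E"
    and IH: "c' * real (n - k) - E * visits B (n - k) (S k \<theta>) - F \<le> a (n - k) (S k \<theta>)"
  shows "c' * real n - E * visits B n \<theta> - F \<le> a n \<theta>"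
proof -
  have "0 \<le> real Q * (c - c')"
    using slack D_nonneg by linarith
  then have "0 \<le> c - c'"
    using \<open>1 \<le> Q\<close> by (simp add: zero_le_mult_iff)
  then have "real Q * (c - c') \<le> real k * (c - c')"
    using k(1) by (intro mult_right_mono) auto
  then have "c' * real k \<le> a k \<theta> - D"
    using slack k(3) by (simp add: algebra_simps)
  moreover have "E * visits B (n - k) (S k \<theta>) \<le> E * visits B n \<theta>"
    using visits_shift_le[OF \<open>\<theta> \<in> space M\<close>] k(2) \<open>0 \<le> E\<close> by (simp add: mult_left_mono)
  moreover have "a k \<theta> + a (n - k) (S k \<theta>) - D \<le> a n \<theta>"
    using a_superadd[OF \<open>\<theta> \<in> space M\<close>, of k "n - k"] k(2) by simp
  moreover have "c' * real n = c' * real k + c' * real (n - k)"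
    using k(2) by (simp add: of_nat_diff algebra_simps)
  ultimately show ?thesis
    using IH by linarith
qed

lemma stopping_time_step_late:
  assumes "\<theta> \<in> space M" "\<theta> \<in> B" and E: "c' + 2 * A + D \<le> E"
    and IH: "c' * real m - E * visits B m (S 1 \<theta>) - F \<le> a m (S 1 \<theta>)"
  shows "c' * real (Suc m) - E * visits B (Suc m) \<theta> - F \<le> a (Suc m) \<theta>"
proof -
  have "visits B (Suc m) \<theta> = 1 + visits B m (S 1 \<theta>)"
    using visits_Suc[OF assms(1)] assms(2) by simp
  moreover have "a 1 \<theta> + a m (S 1 \<theta>) - D \<le> a (Suc m) \<theta>"
    using a_superadd[OF assms(1), of 1 m] by simp
  moreover have "- (2 * A) \<le> a 1 \<theta>"
    using a_bound[OF assms(1), of 1] by simp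
  ultimately show ?thesis
    using IH E by (simp add: algebra_simps)
qed

text \<open>The Katznelson--Weiss stopping-time argument: from \<open>\<theta>\<close> jump ahead by a time
  \<open>k \<in> {Q..K}\<close> with \<open>a\<^sub>k(\<theta>) \<ge> k c\<close> if there is one, otherwise (on \<open>late_set\<close>) by a single step
  whose cost \<open>E\<close> is charged to the visit.\<close>

lemma stopping_time_bound:
  assumes Q: "1 \<le> Q" "Q \<le> K" and slack: "D \<le> real Q * (c - c')"
    and E: "0 \<le> E" "c' + 2 * A + D \<le> E" and F: "A * (real K + 1) + \<bar>c'\<bar> * real K \<le> F"
    and "\<theta> \<in> space M"
  shows "c' * real n - E * visits (late_set c Q K) n \<theta> - F \<le> a n \<theta>"
  using \<open>\<theta> \<in> space M\<close>
proof (induction n arbitrary: \<theta> rule: less_induct)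
  case (less n \<theta>)
  let ?B = "late_set c Q K"
  consider "n \<le> K" | "K < n" "\<theta> \<notin> ?B" | "K < n" "\<theta> \<in> ?B"
    by linarith
  then show ?case
  proof cases
    case 1
    have "A * (real n + 1) \<le> A * (real K + 1)" "c' * real n \<le> \<bar>c'\<bar> * real K"
      using 1 A_nonneg by (auto intro: mult_left_mono mult_mono)
    moreover have "0 \<le> E * visits ?B n \<theta>"
      using E(1) visits_nonneg by simp
    ultimately show ?thesis
      using a_bound[OF less.prems, of n] F by (simp add: abs_le_iff)
  next
    case 2
    then obtain k where k: "Q \<le> k" "k \<le> K" "real k * c \<le> a k \<theta>"
      using less.prems unfolding late_set_def by (auto simp: not_less)
    with 2 Q have "k < n" "n - k < n"
      by auto
    have "S k \<theta> \<in> space M"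
      using measurable_space[OF S_measurable less.prems] .
    with \<open>n - k < n\<close> have "c' * real (n - k) - E * visits ?B (n - k) (S k \<theta>) - F \<le> a (n - k) (S k \<theta>)"
      by (rule less.IH)
    from less.prems Q(1) k(1) \<open>k < n\<close> k(3) slack E(1) this show ?thesis
      by (rule stopping_time_step_record)
  next
    case 3
    then obtain m where n: "n = Suc m"
      using not0_implies_Suc by fastforce
    have "S 1 \<theta> \<in> space M"
      using measurable_space[OF S_measurable less.prems] .
    with n have "c' * real m - E * visits ?B m (S 1 \<theta>) - F \<le> a m (S 1 \<theta>)"
      by (intro less.IH) auto
    with less.prems 3(2) E(2) show ?thesis
      unfolding n by (rule stopping_time_step_late)
  qed
qed

lemma integral_ge_of_stopping_time_bound:
  assumes "1 \<le> Q" "Q \<le> K" "D \<le> real Q * (c - c')"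
    and "0 \<le> E" "c' + 2 * A + D \<le> E" "A * (real K + 1) + \<bar>c'\<bar> * real K \<le> F"
  shows "c' * real n - E * (real n * prob (late_set c Q K)) - F \<le> (\<integral>\<theta>. a n \<theta> \<partial>M)"
proof -
  have "(\<integral>\<theta>. c' * real n - E * visits (late_set c Q K) n \<theta> - F \<partial>M) \<le> (\<integral>\<theta>. a n \<theta> \<partial>M)"
    using stopping_time_bound[OF assms]
    by (intro integral_mono) (auto simp: integrable_a integrable_visits)
  then show ?thesis
    by (simp add: integrable_visits integral_visits prob_space)
qed

lemma eventually_prob_late_set_less:
  assumes freq: "AE \<theta> in M. \<exists>\<^sub>F k in sequentially. real k * c \<le> a k \<theta>" and "0 < \<delta>"
  shows "\<forall>\<^sub>F K in sequentially. prob (late_set c Q K) < \<delta>"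
proof -
  have "decseq (late_set c Q)"
    unfolding late_set_def by (intro decseq_SucI) auto
  then have "(\<lambda>K. prob (late_set c Q K)) \<longlonglongrightarrow> prob (\<Inter>K. late_set c Q K)"
    by (intro finite_Lim_measure_decseq) auto
  moreover have "prob (\<Inter>K. late_set c Q K) = 0"
  proof (subst prob_eq_0)
    show "AE \<theta> in M. \<theta> \<notin> (\<Inter>K. late_set c Q K)"
      using freq
    proof eventually_elim
      case (elim \<theta>)
      then obtain k where "Q \<le> k" "real k * c \<le> a k \<theta>"
        by (auto simp: frequently_sequentially)
      then have "\<theta> \<notin> late_set c Q k"
        by (auto simp: late_set_def not_less)
      then show ?case
        by blast
    qed
  qed auto
  ultimately show ?thesis
    using \<open>0 < \<delta>\<close> by (auto intro: order_tendstoD)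
qed

theorem eventually_integral_ge:
  assumes freq: "AE \<theta> in M. \<exists>\<^sub>F k in sequentially. real k * c \<le> a k \<theta>" and "0 < e"
  shows "\<forall>\<^sub>F n in sequentially. real n * (c - e) \<le> (\<integral>\<theta>. a n \<theta> \<partial>M)"
proof -
  obtain N :: nat where "3 * D / e < real N"
    using reals_Archimedean2 by blast
  define Q where "Q = Suc N"
  define c' where "c' = c - D / real Q"
  have "1 \<le> Q" by (simp add: Q_def)
  have "D / real Q \<le> e / 3"
    using \<open>3 * D / e < real N\<close> \<open>0 < e\<close> D_nonneg
    by (simp add: Q_def field_simps)
  then have c': "c - e / 3 \<le> c'" and slack: "D \<le> real Q * (c - c')"
    by (auto simp: c'_def Q_def)
  define E where "E = 2 * A + D + \<bar>c'\<bar>"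
  have "0 \<le> E" by (simp add: E_def A_nonneg D_nonneg)
  obtain N' where N': "\<And>K. N' \<le> K \<Longrightarrow> prob (late_set c Q K) < e / (3 * (E + 1))"
    using eventually_prob_late_set_less[OF freq, of "e / (3 * (E + 1))" Q] \<open>0 < e\<close> \<open>0 \<le> E\<close>
    by (auto simp: eventually_sequentially)
  define K where "K = max N' Q"
  have "Q \<le> K" and small: "prob (late_set c Q K) < e / (3 * (E + 1))"
    using N' by (auto simp: K_def)
  define B where "B = late_set c Q K"
  define F where "F = A * (real K + 1) + \<bar>c'\<bar> * real K"
  have EB: "E * prob B \<le> e / 3"
  proof -
    have "E * prob B \<le> (E + 1) * prob B" by (simp add: distrib_right)
    also have "\<dots> \<le> e / 3"
      using small \<open>0 \<le> E\<close> by (simp add: B_def field_simps)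
    finally show ?thesis .
  qed
  have integral_ge: "c' * real n - E * (real n * prob B) - F \<le> (\<integral>\<theta>. a n \<theta> \<partial>M)" for n
    unfolding B_def
    by (rule integral_ge_of_stopping_time_bound[OF \<open>1 \<le> Q\<close> \<open>Q \<le> K\<close> slack \<open>0 \<le> E\<close>])
      (auto simp: E_def F_def)
  have "\<forall>\<^sub>F n in sequentially. F < real n * (e / 3)"
    using \<open>0 < e\<close> by (intro eventually_less_linear) simp
  then show ?thesis
  proof (rule eventually_mono)
    fix n assume F_less: "F < real n * (e / 3)"
    have "real n * (c - e / 3) \<le> c' * real n"
      using mult_left_mono[OF c', of "real n"] by (simp add: mult.commute)
    moreover have "E * (real n * prob B) \<le> real n * (e / 3)"
      using mult_left_mono[OF EB, of "real n"] by (simp add: mult.left_commute)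
    ultimately show "real n * (c - e) \<le> (\<integral>\<theta>. a n \<theta> \<partial>M)"
      using integral_ge[of n] F_less by (simp add: algebra_simps)
  qed
qed

end

lemma sets_limsup_rate_ge:
  assumes [measurable]: "\<And>k. b k \<in> borel_measurable M"
  shows "{\<theta> \<in> space M. limsup_rate_ge (\<lambda>k. b k \<theta>) c} \<in> sets M"
  unfolding limsup_rate_ge_iff_countable by measurable

lemma (in prob_space) AE_frequently_if_prob_limsup_rate_ge:
  assumes [measurable]: "\<And>k. b k \<in> borel_measurable M"
    and "prob {\<theta> \<in> space M. limsup_rate_ge (\<lambda>k. b k \<theta>) c} = 1" and "c' < c"
  shows "AE \<theta> in M. \<exists>\<^sub>F k in sequentially. real k * c' \<le> b k \<theta>"
proof -
  have "AE \<theta> in M. \<theta> \<in> {\<theta> \<in> space M. limsup_rate_ge (\<lambda>k. b k \<theta>) c}"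
    using assms(2) sets_limsup_rate_ge[of b M c] by (subst prob_eq_1[symmetric]) auto
  then show ?thesis
    by eventually_elim (use \<open>c' < c\<close> in \<open>simp add: limsup_rate_ge_def\<close>)
qed

lemma (in prob_space) AE_not_limsup_rate_ge:
  assumes [measurable]: "\<And>k. b k \<in> borel_measurable M"
    and null: "\<And>c. L < c \<Longrightarrow> prob {\<theta> \<in> space M. limsup_rate_ge (\<lambda>k. b k \<theta>) c} = 0"
  shows "AE \<theta> in M. \<forall>c>L. \<not> limsup_rate_ge (\<lambda>k. b k \<theta>) c"
proof -
  have "AE \<theta> in M. \<forall>j::nat. \<not> limsup_rate_ge (\<lambda>k. b k \<theta>) (L + 1 / real (Suc j))"
    unfolding AE_all_countable
  proof
    fix j :: nat
    have "prob {\<theta> \<in> space M. limsup_rate_ge (\<lambda>k. b k \<theta>) (L + 1 / real (Suc j))} = 0"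
      by (rule null) simp
    then show "AE \<theta> in M. \<not> limsup_rate_ge (\<lambda>k. b k \<theta>) (L + 1 / real (Suc j))"
      using sets_limsup_rate_ge[of b M] by (subst (asm) prob_eq_0) auto
  qed
  then show ?thesis
  proof eventually_elim
    case (elim \<theta>)
    show ?case
    proof (intro allI impI)
      fix c assume "L < c"
      then obtain j :: nat where "1 / real (Suc j) < c - L"
        by (metis diff_gt_0_iff_gt inverse_eq_divide reals_Archimedean)
      then show "\<not> limsup_rate_ge (\<lambda>k. b k \<theta>) c"
        using elim limsup_rate_ge_antimono[of "L + 1 / real (Suc j)" c] by auto
    qed
  qed
qed

lemma mds_measurable_flow:
  assumes "mds M w"
  shows "w t \<in> M \<rightarrow>\<^sub>M M"
proof -
  have "(\<lambda>\<theta>. (\<lambda>(t, \<theta>). w t \<theta>) (t, \<theta>)) \<in> M \<rightarrow>\<^sub>M M"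
    using assms unfolding mds_def by (intro measurable_compose[OF measurable_Pair1']) auto
  then show ?thesis
    by simp
qed

lemma mds_flow_inverse:
  assumes "mds M w" "\<theta> \<in> space M"
  shows "w (- t) (w t \<theta>) = \<theta>"
  using assms unfolding mds_def by (metis add.right_inverse)

lemma mds_flow_space:
  assumes "mds M w" "\<theta> \<in> space M"
  shows "w t \<theta> \<in> space M"
  using measurable_space[OF mds_measurable_flow[OF assms(1)] assms(2)] .

lemma limsup_rate_ge_flow_iff:
  assumes mds: "mds M w"
    and shift: "\<And>\<theta> s. \<theta> \<in> space M \<Longrightarrow> 0 \<le> s \<Longrightarrow> \<exists>m R. \<forall>k. \<bar>b k (w s \<theta>) - b (k + m) \<theta>\<bar> \<le> R"
    and \<theta>: "\<theta> \<in> space M"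
  shows "limsup_rate_ge (\<lambda>k. b k (w t \<theta>)) c \<longleftrightarrow> limsup_rate_ge (\<lambda>k. b k \<theta>) c"
proof -
  have forward: "limsup_rate_ge (\<lambda>k. b k (w s \<theta>')) c \<longleftrightarrow> limsup_rate_ge (\<lambda>k. b k \<theta>') c"
    if \<theta>': "\<theta>' \<in> space M" and s: "0 \<le> s" for \<theta>' s
  proof -
    obtain m R where "\<forall>k. \<bar>b k (w s \<theta>') - b (k + m) \<theta>'\<bar> \<le> R"
      using shift[OF \<theta>' s] by blast
    then show ?thesis
      by (intro limsup_rate_ge_bounded_shift[where m = m and R = R]) blast
  qed
  show ?thesis
  proof (cases "0 \<le> t")
    case True
    then show ?thesis
      by (rule forward[OF \<theta>])
  next
    case False
    then have "limsup_rate_ge (\<lambda>k. b k (w (- t) (w t \<theta>))) c \<longleftrightarrow> limsup_rate_ge (\<lambda>k. b k (w t \<theta>)) c"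
      by (intro forward mds_flow_space[OF mds \<theta>]) simp
    then show ?thesis
      by (simp add: mds_flow_inverse[OF mds \<theta>])
  qed
qed

lemma flow_invariant_limsup_rate_ge:
  assumes mds: "mds M w"
    and b: "\<And>k. b k \<in> borel_measurable M"
    and shift: "\<And>\<theta> s. \<theta> \<in> space M \<Longrightarrow> 0 \<le> s \<Longrightarrow> \<exists>m R. \<forall>k. \<bar>b k (w s \<theta>) - b (k + m) \<theta>\<bar> \<le> R"
  shows "flow_invariant M w {\<theta> \<in> space M. limsup_rate_ge (\<lambda>k. b k \<theta>) c}"
proof -
  define W where "W = {\<theta> \<in> space M. limsup_rate_ge (\<lambda>k. b k \<theta>) c}"
  have mem: "\<theta> \<in> w t -` W \<inter> space M \<longleftrightarrow> \<theta> \<in> W" for \<theta> t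
  proof (cases "\<theta> \<in> space M")
    case True
    have "\<theta> \<in> w t -` W \<inter> space M \<longleftrightarrow> limsup_rate_ge (\<lambda>k. b k (w t \<theta>)) c"
      using True mds_flow_space[OF mds True, of t] by (simp add: W_def)
    also have "\<dots> \<longleftrightarrow> limsup_rate_ge (\<lambda>k. b k \<theta>) c"
      by (rule limsup_rate_ge_flow_iff[where b = b, OF mds shift True])
    also have "\<dots> \<longleftrightarrow> \<theta> \<in> W"
      using True by (simp add: W_def)
    finally show ?thesis .
  qed (simp add: W_def)
  have "w t -` W \<inter> space M = W" for t
    by (rule set_eqI) (rule mem)
  moreover have "W \<in> sets M"
    unfolding W_def by (rule sets_limsup_rate_ge[OF b])
  ultimately show ?thesis
    unfolding flow_invariant_def W_def[symmetric] by simp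
qed

locale lifted_circle_cocycle =
  fixes M :: "'a measure" and w :: "real \<Rightarrow> 'a \<Rightarrow> 'a"
    and \<psi> :: "real \<Rightarrow> 'a \<Rightarrow> real \<Rightarrow> real" and C \<eta> :: real
  assumes ergodic: "ergodic_mds M w"
    and measurable_skew_product:
      "(\<lambda>(t, \<theta>, x). (w t \<theta>, \<psi> t \<theta> x)) \<in> borel \<Otimes>\<^sub>M (M \<Otimes>\<^sub>M borel) \<rightarrow>\<^sub>M M \<Otimes>\<^sub>M borel"
    and cocycle: "\<theta> \<in> space M \<Longrightarrow> \<psi> (t1 + t2) \<theta> x = \<psi> t2 (w t1 \<theta>) (\<psi> t1 \<theta> x)"
    and periodic: "\<theta> \<in> space M \<Longrightarrow> \<psi> t \<theta> (x + 1) = \<psi> t \<theta> x + 1"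
    and almost_monotone: "\<theta> \<in> space M \<Longrightarrow> x \<le> x' \<Longrightarrow> \<psi> t \<theta> x \<le> \<psi> t \<theta> x' + C"
    and unit_time_bound: "0 \<le> t \<Longrightarrow> t \<le> 1 \<Longrightarrow> \<theta> \<in> space M \<Longrightarrow> \<bar>\<psi> t \<theta> x - x\<bar> \<le> \<eta>"
begin

lemma mds: "mds M w"
  using ergodic by (simp add: ergodic_mds_def)

sublocale prob_space M
  using mds by (simp add: mds_def)

lemma w_measurable [measurable]: "w t \<in> M \<rightarrow>\<^sub>M M"
  by (rule mds_measurable_flow[OF mds])

lemma w_space: "\<theta> \<in> space M \<Longrightarrow> w t \<theta> \<in> space M"
  by (rule mds_flow_space[OF mds])

lemma psi_measurable [measurable]: "(\<lambda>\<theta>. \<psi> t \<theta> x) \<in> borel_measurable M"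
proof -
  have "(\<lambda>\<theta>. (t, \<theta>, x)) \<in> M \<rightarrow>\<^sub>M borel \<Otimes>\<^sub>M (M \<Otimes>\<^sub>M borel)"
    by measurable
  from measurable_compose[OF measurable_compose[OF this measurable_skew_product] measurable_snd]
  show ?thesis
    by simp
qed

lemma C_nonneg: "0 \<le> C"
proof -
  obtain \<theta> where "\<theta> \<in> space M"
    using not_empty by blast
  from almost_monotone[OF this order.refl, of 0 0] show ?thesis
    by simp
qed

lemma psi_add_nat: "\<theta> \<in> space M \<Longrightarrow> \<psi> t \<theta> (x + real n) = \<psi> t \<theta> x + real n"
proof (induction n arbitrary: x)
  case (Suc n)
  then show ?case
    using periodic[OF Suc.prems, of t "x + real n"] by (simp add: algebra_simps)
qed simp

lemma psi_add_int:
  assumes "\<theta> \<in> space M"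
  shows "\<psi> t \<theta> (x + of_int k) = \<psi> t \<theta> x + of_int k"
proof (cases "0 \<le> k")
  case True
  then show ?thesis
    using psi_add_nat[OF assms, of t x "nat k"] by simp
next
  case False
  then show ?thesis
    using psi_add_nat[OF assms, of t "x + of_int k" "nat (- k)"] by simp
qed

text \<open>Write \<open>y = r + \<lfloor>y\<rfloor>\<close> with \<open>0 \<le> r \<le> 1\<close> and compare \<open>\<psi>\<^sub>t(\<theta>, r)\<close> with the values
  at 0 and 1.\<close>

lemma psi_displacement_close:
  assumes "\<theta> \<in> space M"
  shows "\<bar>\<psi> t \<theta> y - y - \<psi> t \<theta> 0\<bar> \<le> C + 1"
proof -
  define r where "r = y - of_int \<lfloor>y\<rfloor>"
  have r: "0 \<le> r" "r \<le> 1"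
    unfolding r_def by linarith+
  have "\<psi> t \<theta> y = \<psi> t \<theta> r + of_int \<lfloor>y\<rfloor>"
    using psi_add_int[OF assms, of t r "\<lfloor>y\<rfloor>"] by (simp add: r_def)
  moreover have "\<psi> t \<theta> 0 \<le> \<psi> t \<theta> r + C" "\<psi> t \<theta> r \<le> \<psi> t \<theta> 1 + C"
    using almost_monotone[OF assms] r by auto
  moreover have "\<psi> t \<theta> 1 = \<psi> t \<theta> 0 + 1"
    using periodic[OF assms, of t 0] by simp
  ultimately show ?thesis
    using r unfolding r_def by linarith
qed

definition disp :: "nat \<Rightarrow> 'a \<Rightarrow> real" where
  "disp n \<theta> = \<psi> (real n) \<theta> 0"

lemma disp_measurable [measurable]: "disp n \<in> borel_measurable M"
  unfolding disp_def by measurable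

lemma disp_almost_additive:
  assumes "\<theta> \<in> space M"
  shows "\<bar>disp (n + m) \<theta> - disp n \<theta> - disp m (w (real n) \<theta>)\<bar> \<le> C + 1"
  using cocycle[OF assms, of "real n" "real m" 0]
    psi_displacement_close[OF w_space[OF assms, of "real n"], of "real m" "\<psi> (real n) \<theta> 0"]
  by (simp add: disp_def)

lemma psi_close_disp_floor:
  assumes "\<theta> \<in> space M" "0 \<le> t"
  shows "\<bar>\<psi> t \<theta> x - x - disp (nat \<lfloor>t\<rfloor>) \<theta>\<bar> \<le> \<eta> + C + 1"
proof -
  define n where "n = nat \<lfloor>t\<rfloor>"
  have n: "real n \<le> t" "t \<le> real n + 1"
    using assms(2) unfolding n_def by linarith+
  have "\<psi> t \<theta> x = \<psi> (t - real n) (w (real n) \<theta>) (\<psi> (real n) \<theta> x)"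
    using cocycle[OF assms(1), of "real n" "t - real n" x] by simp
  moreover have "\<bar>\<psi> (t - real n) (w (real n) \<theta>) (\<psi> (real n) \<theta> x) - \<psi> (real n) \<theta> x\<bar> \<le> \<eta>"
    using n by (intro unit_time_bound w_space assms(1)) auto
  moreover have "\<bar>\<psi> (real n) \<theta> x - x - disp n \<theta>\<bar> \<le> C + 1"
    using psi_displacement_close[OF assms(1)] by (simp add: disp_def)
  ultimately show ?thesis
    unfolding n_def[symmetric] by linarith
qed

lemma disp_bound:
  assumes "\<theta> \<in> space M"
  shows "\<bar>disp n \<theta>\<bar> \<le> (\<eta> + C + 1) * (real n + 1)"
proof (induction n)
  case 0
  show ?case
    using unit_time_bound[OF _ _ assms, of 0 0] C_nonneg by (simp add: disp_def)
next
  case (Suc n)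
  have "\<bar>disp (n + 1) \<theta> - disp n \<theta> - disp 1 (w (real n) \<theta>)\<bar> \<le> C + 1"
    by (rule disp_almost_additive[OF assms])
  moreover have "\<bar>disp 1 (w (real n) \<theta>)\<bar> \<le> \<eta>"
    using unit_time_bound[OF _ _ w_space[OF assms], of 1 "real n" 0] by (simp add: disp_def)
  ultimately show ?case
    using Suc.IH by (simp add: algebra_simps)
qed

lemma disp_flow_shift:
  assumes "\<theta> \<in> space M" "0 \<le> s"
  shows "\<bar>disp k (w s \<theta>) - disp (k + nat \<lfloor>s\<rfloor>) \<theta>\<bar> \<le> 2 * (C + 1) + \<eta> + \<bar>\<psi> s \<theta> 0\<bar>"
proof -
  have "nat \<lfloor>s + real k\<rfloor> = k + nat \<lfloor>s\<rfloor>"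
    using assms(2) by (simp add: nat_add_distrib)
  then have "\<bar>\<psi> (s + real k) \<theta> 0 - disp (k + nat \<lfloor>s\<rfloor>) \<theta>\<bar> \<le> \<eta> + C + 1"
    using psi_close_disp_floor[OF assms(1), of "s + real k" 0] assms(2) by simp
  moreover have "\<psi> (s + real k) \<theta> 0 = \<psi> (real k) (w s \<theta>) (\<psi> s \<theta> 0)"
    by (rule cocycle[OF assms(1)])
  moreover have "\<bar>\<psi> (real k) (w s \<theta>) (\<psi> s \<theta> 0) - \<psi> s \<theta> 0 - disp k (w s \<theta>)\<bar> \<le> C + 1"
    using psi_displacement_close[OF w_space[OF assms(1), of s], of "real k" "\<psi> s \<theta> 0"]
    by (simp add: disp_def)
  ultimately show ?thesis
    using abs_ge_self[of "\<psi> s \<theta> 0"] abs_ge_minus_self[of "\<psi> s \<theta> 0"]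
    by (auto simp: abs_le_iff)
qed

lemma disp_bounded_shift:
  assumes "\<theta> \<in> space M" "0 \<le> s"
  shows "\<exists>m R. \<forall>k. \<bar>disp k (w s \<theta>) - disp (k + m) \<theta>\<bar> \<le> R"
proof (intro exI allI)
  show "\<bar>disp k (w s \<theta>) - disp (k + nat \<lfloor>s\<rfloor>) \<theta>\<bar> \<le> 2 * (C + 1) + \<eta> + \<bar>\<psi> s \<theta> 0\<bar>" for k
    by (rule disp_flow_shift[OF assms])
qed

sublocale disp_process: almost_superadditive M "\<lambda>n. w (real n)" disp "\<eta> + C + 1" "C + 1"
proof
  show "distr M M (w (real n)) = M" for n
    using mds by (simp add: mds_def)
  show "w (real 0) \<theta> = \<theta>" if "\<theta> \<in> space M" for \<theta>
    using mds that by (simp add: mds_def)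
  show "w (real (n + m)) \<theta> = w (real m) (w (real n) \<theta>)" if "\<theta> \<in> space M" for n m \<theta>
    using mds that by (simp add: mds_def)
  show "disp n \<theta> + disp m (w (real n) \<theta>) - (C + 1) \<le> disp (n + m) \<theta>" if "\<theta> \<in> space M" for n m \<theta>
    using disp_almost_additive[OF that, of n m] by linarith
  show "w (real n) \<in> M \<rightarrow>\<^sub>M M" for n
    by (rule w_measurable)
  show "\<bar>disp n \<theta>\<bar> \<le> (\<eta> + C + 1) * (real n + 1)" if "\<theta> \<in> space M" for n \<theta>
    by (rule disp_bound[OF that])
qed (simp_all add: C_nonneg)

sublocale neg_disp_process: almost_superadditive M "\<lambda>n. w (real n)" "\<lambda>n \<theta>. - disp n \<theta>" "\<eta> + C + 1" "C + 1"
proof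
  show "- disp n \<theta> + - disp m (w (real n) \<theta>) - (C + 1) \<le> - disp (n + m) \<theta>"
    if "\<theta> \<in> space M" for n m \<theta>
    using disp_almost_additive[OF that, of n m] by linarith
  show "\<bar>- disp n \<theta>\<bar> \<le> (\<eta> + C + 1) * (real n + 1)" if "\<theta> \<in> space M" for n \<theta>
    using disp_bound[OF that] by simp
qed (use disp_process.S_measurable disp_process.distr_S disp_process.S_0 disp_process.S_add
    C_nonneg in simp_all)

text \<open>By ergodicity each event \<open>limsup\<^sub>k b\<^sub>k/k \<ge> c\<close> is trivial; the threshold \<open>L\<close> is the
  almost sure value of \<open>limsup\<^sub>k b\<^sub>k/k\<close>.\<close>

lemma essential_limsup_rate:
  assumes b: "\<And>k. b k \<in> borel_measurable M"
    and shift: "\<And>\<theta> s. \<theta> \<in> space M \<Longrightarrow> 0 \<le> s \<Longrightarrow> \<exists>m R. \<forall>k. \<bar>b k (w s \<theta>) - b (k + m) \<theta>\<bar> \<le> R"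
    and bound: "\<And>n \<theta>. \<theta> \<in> space M \<Longrightarrow> \<bar>b n \<theta>\<bar> \<le> A * (real n + 1)"
  shows "\<exists>L. (\<forall>c<L. prob {\<theta> \<in> space M. limsup_rate_ge (\<lambda>k. b k \<theta>) c} = 1) \<and>
             (\<forall>c>L. prob {\<theta> \<in> space M. limsup_rate_ge (\<lambda>k. b k \<theta>) c} = 0)"
proof (rule zero_one_threshold)
  show "{\<theta> \<in> space M. limsup_rate_ge (\<lambda>k. b k \<theta>) c} \<in> sets M" for c
    by (rule sets_limsup_rate_ge[OF b])
  show "{\<theta> \<in> space M. limsup_rate_ge (\<lambda>k. b k \<theta>) c'} \<subseteq> {\<theta> \<in> space M. limsup_rate_ge (\<lambda>k. b k \<theta>) c}"
    if "c \<le> c'" for c c'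
    using limsup_rate_ge_antimono[OF that] by blast
  show "prob {\<theta> \<in> space M. limsup_rate_ge (\<lambda>k. b k \<theta>) c} = 0 \<or>
        prob {\<theta> \<in> space M. limsup_rate_ge (\<lambda>k. b k \<theta>) c} = 1" for c
    using ergodic flow_invariant_limsup_rate_ge[where b = b, OF mds b shift]
    by (simp add: ergodic_mds_def)
  have "limsup_rate_ge (\<lambda>k. b k \<theta>) (- A)" if "\<theta> \<in> space M" for \<theta>
    using bound[OF that] by (rule limsup_rate_ge_linear_lower)
  then have "{\<theta> \<in> space M. limsup_rate_ge (\<lambda>k. b k \<theta>) (- A)} = space M"
    by auto
  then show "prob {\<theta> \<in> space M. limsup_rate_ge (\<lambda>k. b k \<theta>) (- A)} = 1"
    by (simp add: prob_space)
  show "c \<le> A" if "prob {\<theta> \<in> space M. limsup_rate_ge (\<lambda>k. b k \<theta>) c} = 1" for c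
  proof -
    have "{\<theta> \<in> space M. limsup_rate_ge (\<lambda>k. b k \<theta>) c} \<noteq> {}"
    proof
      assume "{\<theta> \<in> space M. limsup_rate_ge (\<lambda>k. b k \<theta>) c} = {}"
      with that show False
        by simp
    qed
    then obtain \<theta> where \<theta>: "\<theta> \<in> space M" and rate: "limsup_rate_ge (\<lambda>k. b k \<theta>) c"
      by auto
    from bound[OF \<theta>] rate show ?thesis
      by (rule limsup_rate_ge_linear_upper)
  qed
qed

lemma neg_disp_bounded_shift:
  assumes "\<theta> \<in> space M" "0 \<le> s"
  shows "\<exists>m R. \<forall>k. \<bar>- disp k (w s \<theta>) - - disp (k + m) \<theta>\<bar> \<le> R"
  using disp_bounded_shift[OF assms] by (simp add: abs_minus_commute)

text \<open>The almost sure upper rates of \<open>disp\<close> and \<open>-disp\<close> bound the expectations of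
  \<open>disp\<^sub>n\<close> and \<open>-disp\<^sub>n\<close> from below, and these expectations cancel.\<close>

lemma upper_rates_sum_nonpos:
  assumes rate: "\<And>c. c < L \<Longrightarrow> prob {\<theta> \<in> space M. limsup_rate_ge (\<lambda>k. disp k \<theta>) c} = 1"
    and rate': "\<And>c. c < L' \<Longrightarrow> prob {\<theta> \<in> space M. limsup_rate_ge (\<lambda>k. - disp k \<theta>) c} = 1"
  shows "L + L' \<le> 0"
proof (rule field_le_epsilon)
  fix \<epsilon> :: real assume "0 < \<epsilon>"
  define e where "e = \<epsilon> / 4"
  have "0 < e"
    using \<open>0 < \<epsilon>\<close> by (simp add: e_def)
  have "AE \<theta> in M. \<exists>\<^sub>F k in sequentially. real k * (L - e) \<le> disp k \<theta>"
    using rate[of "L - e / 2"] \<open>0 < e\<close>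
    by (intro AE_frequently_if_prob_limsup_rate_ge[where b = disp]) auto
  then have "\<forall>\<^sub>F n in sequentially. real n * (L - e - e) \<le> (\<integral>\<theta>. disp n \<theta> \<partial>M)"
    using \<open>0 < e\<close> by (rule disp_process.eventually_integral_ge)
  moreover have "AE \<theta> in M. \<exists>\<^sub>F k in sequentially. real k * (L' - e) \<le> - disp k \<theta>"
    using rate'[of "L' - e / 2"] \<open>0 < e\<close>
    by (intro AE_frequently_if_prob_limsup_rate_ge[where b = "\<lambda>k \<theta>. - disp k \<theta>"]) auto
  then have "\<forall>\<^sub>F n in sequentially. real n * (L' - e - e) \<le> (\<integral>\<theta>. - disp n \<theta> \<partial>M)"
    using \<open>0 < e\<close> by (rule neg_disp_process.eventually_integral_ge)
  ultimately have "\<forall>\<^sub>F n in sequentially. 0 < n \<and> real n * (L + L' - 4 * e) \<le> 0"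
    using eventually_gt_at_top[of 0]
    by eventually_elim (simp add: algebra_simps)
  then obtain n :: nat where "0 < n" "real n * (L + L' - 4 * e) \<le> 0"
    by (auto simp: eventually_sequentially)
  then show "L + L' \<le> 0 + \<epsilon>"
    by (simp add: mult_le_0_iff e_def)
qed

theorem AE_disp_rate_tendsto: "\<exists>\<rho>. AE \<theta> in M. (\<lambda>k. disp k \<theta> / real k) \<longlonglongrightarrow> \<rho>"
proof -
  obtain L where
    L_pos: "\<And>c. c < L \<Longrightarrow> prob {\<theta> \<in> space M. limsup_rate_ge (\<lambda>k. disp k \<theta>) c} = 1" and
    L_null: "\<And>c. L < c \<Longrightarrow> prob {\<theta> \<in> space M. limsup_rate_ge (\<lambda>k. disp k \<theta>) c} = 0"
    using essential_limsup_rate[where b = disp, OF disp_measurable disp_bounded_shift disp_bound]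
    by blast
  obtain L' where
    L'_pos: "\<And>c. c < L' \<Longrightarrow> prob {\<theta> \<in> space M. limsup_rate_ge (\<lambda>k. - disp k \<theta>) c} = 1" and
    L'_null: "\<And>c. L' < c \<Longrightarrow> prob {\<theta> \<in> space M. limsup_rate_ge (\<lambda>k. - disp k \<theta>) c} = 0"
    using essential_limsup_rate[where b = "\<lambda>k \<theta>. - disp k \<theta>", OF _ neg_disp_bounded_shift]
      disp_bound by fastforce
  have "L + L' \<le> 0"
    using L_pos L'_pos by (rule upper_rates_sum_nonpos)
  have "AE \<theta> in M. \<forall>c>L. \<not> limsup_rate_ge (\<lambda>k. disp k \<theta>) c"
    using L_null by (rule AE_not_limsup_rate_ge[OF disp_measurable])
  moreover have "AE \<theta> in M. \<forall>c>- L. \<not> limsup_rate_ge (\<lambda>k. - disp k \<theta>) c"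
    using L'_null \<open>L + L' \<le> 0\<close> by (intro AE_not_limsup_rate_ge[where b = "\<lambda>k \<theta>. - disp k \<theta>"]) auto
  ultimately have "AE \<theta> in M. (\<lambda>k. disp k \<theta> / real k) \<longlonglongrightarrow> L"
    by eventually_elim (rule tendsto_rate_if_not_limsup_rate_ge; simp)
  then show ?thesis ..
qed

theorem rotation_number:
  "\<exists>\<rho>. \<exists>\<Theta>\<^sub>0. \<Theta>\<^sub>0 \<subseteq> space M \<and> \<Theta>\<^sub>0 \<in> sets M \<and> prob \<Theta>\<^sub>0 = 1 \<and>
     (\<forall>\<theta>\<in>\<Theta>\<^sub>0. \<forall>x. ((\<lambda>t. (\<psi> t \<theta> x - x) / t) \<longlongrightarrow> \<rho>) at_top)"
proof -
  obtain \<rho> where "AE \<theta> in M. (\<lambda>k. disp k \<theta> / real k) \<longlonglongrightarrow> \<rho>"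
    using AE_disp_rate_tendsto by blast
  then obtain N where N: "{\<theta> \<in> space M. \<not> (\<lambda>k. disp k \<theta> / real k) \<longlonglongrightarrow> \<rho>} \<subseteq> N"
    "emeasure M N = 0" "N \<in> sets M"
    by (rule AE_E)
  define \<Theta>\<^sub>0 where "\<Theta>\<^sub>0 = space M - N"
  have "prob \<Theta>\<^sub>0 = 1"
    using prob_compl[OF N(3)] N(2) by (simp add: \<Theta>\<^sub>0_def emeasure_eq_measure)
  moreover have "((\<lambda>t. (\<psi> t \<theta> x - x) / t) \<longlongrightarrow> \<rho>) at_top" if "\<theta> \<in> \<Theta>\<^sub>0" for \<theta> x
    using that N(1) psi_close_disp_floor[of \<theta>]
    by (intro tendsto_at_top_if_close_to_floor[where x = "\<lambda>k. disp k \<theta>"]) (auto simp: \<Theta>\<^sub>0_def)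
  ultimately show ?thesis
    using N(3) by (intro exI[of _ \<rho>] exI[of _ \<Theta>\<^sub>0]) (auto simp: \<Theta>\<^sub>0_def)
qed

end

theorem theorem3p1:
  fixes M :: "'a measure" and w :: "real \<Rightarrow> 'a \<Rightarrow> 'a"
    and \<psi> :: "real \<Rightarrow> 'a \<Rightarrow> real \<Rightarrow> real"
  assumes erg: "ergodic_mds M w"
    and meas: "(\<lambda>(t, \<theta>, x). (w t \<theta>, \<psi> t \<theta> x)) \<in> borel \<Otimes>\<^sub>M (M \<Otimes>\<^sub>M borel) \<rightarrow>\<^sub>M M \<Otimes>\<^sub>M borel"
    and cocycle: "\<And>t1 t2 \<theta> x. \<theta> \<in> space M \<Longrightarrow>
                    \<psi> (t1 + t2) \<theta> x = \<psi> t2 (w t1 \<theta>) (\<psi> t1 \<theta> x)"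
    and per: "\<And>t \<theta> x. \<theta> \<in> space M \<Longrightarrow> \<psi> t \<theta> (x + 1) = \<psi> t \<theta> x + 1"
    and mono: "\<exists>C\<ge>0. \<forall>t. \<forall>\<theta>\<in>space M. \<forall>x x'. x \<le> x' \<longrightarrow> \<psi> t \<theta> x \<le> \<psi> t \<theta> x' + C"
    and bdd: "\<exists>\<eta>\<ge>0. \<forall>t\<in>{0..1}. \<forall>\<theta>\<in>space M. \<forall>x. \<bar>\<psi> t \<theta> x - x\<bar> \<le> \<eta>"
  shows "\<exists>\<rho>::real. \<exists>\<Theta>0. \<Theta>0 \<subseteq> space M \<and> \<Theta>0 \<in> sets M \<and> measure M \<Theta>0 = 1 \<and>
           (\<forall>\<theta>\<in>\<Theta>0. \<forall>x. ((\<lambda>t. (\<psi> t \<theta> x - x) / t) \<longlongrightarrow> \<rho>) at_top)"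
proof -
  obtain C where C: "\<forall>t. \<forall>\<theta>\<in>space M. \<forall>x x'. x \<le> x' \<longrightarrow> \<psi> t \<theta> x \<le> \<psi> t \<theta> x' + C"
    using mono by blast
  obtain \<eta> where \<eta>: "\<forall>t\<in>{0..1}. \<forall>\<theta>\<in>space M. \<forall>x. \<bar>\<psi> t \<theta> x - x\<bar> \<le> \<eta>"
    using bdd by blast
  interpret lifted_circle_cocycle M w \<psi> C \<eta>
    by unfold_locales (use erg meas cocycle per C \<eta> in auto)
  show ?thesis
    by (rule rotation_number)
qed

end
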